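(* Let $x_L<x_R$, $\Delta x=x_R-x_L$, and let $\sigma_L,\sigma_R:[0,\infty)\to[0,\infty)$ be piecewise linear continuous functions. Define for $x\in[x_L,x_R]$, $y\ge0$, $$\sigma(x,y)=\frac{\sigma_R(y)(x-x_L)+\sigma_L(y)(x_R-x)}{\Delta x},\qquad B(x)=B_L+(B_R-B_L)\frac{x-x_L}{\Delta x},$$ with $B_L,B_R\in\mathbb R$. Let $W\in\mathbb R$ be a constant water-surface elevation and $h(x)=\max(W-B(x),0)$. Set $$A(x)=\int_0^{h(x)}\sigma(x,y)\,dy,\quad I_1(x)=\int_0^{h(x)}(h(x)-y)\sigma(x,y)\,dy,\quad I_2(x)=\int_0^{h(x)}(h(x)-y)\,\partial_x\sigma(x,y)\,dy.$$ Then $$I_1(x_R)-I_1(x_L)-\int_{x_L}^{x_R}I_2(x)\,dx+\int_{x_L}^{x_R}A(x)\,B'(x)\,dx=0.$$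
   Context: $I_1$ is the hydrostatic pressure force and $I_2$ the wall pressure force of a channel with cross-section width $\sigma(x,y)$ at longitudinal position $x$ and height $y$ above the bed $B(x)$; the cross-section is linearly interpolated in $x$ between two given piecewise-linear cross-sections at the cell ends. *)

theory Defs
  imports "HOL-Analysis.Analysis"
begin

definition piecewise_linear_nonneg_half :: "(real \<Rightarrow> real) \<Rightarrow> bool" where
  "piecewise_linear_nonneg_half f \<longleftrightarrow>
     (\<exists>(t :: nat \<Rightarrow> real) (n :: nat).
        t 0 = 0 \<and> (\<forall>i<n. t i < t (Suc i)) \<and>
        (\<forall>i<n. \<exists>a b. \<forall>y\<in>{t i..t (Suc i)}. f y = a * y + b) \<and>
        (\<exists>a b. \<forall>y\<in>{t n..}. f y = a * y + b))"

end

theory Submission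
  imports Defs
begin

text \<open>For a single cross-section of width \<open>s\<close> at depth \<open>u\<close>, the pressure force
  \<open>\<integral>\<^sub>0\<^sup>u (u - y) s(y) dy\<close> has derivative \<open>\<integral>\<^sub>0\<^sup>u s\<close> in \<open>u\<close> (Leibniz's rule, the boundary term vanishing).
  Since the width is affine in \<open>x\<close>, so is the force at fixed depth, and differentiating
  \<open>I\<^sub>1(x)\<close> along the channel gives \<open>I\<^sub>2(x) + A(x) h'(x) = I\<^sub>2(x) - A(x) B'(x)\<close> wherever the bed
  is not exactly at the surface. The fundamental theorem of calculus, with that single
  exceptional point, yields the balance.\<close>

definition section_area :: "(real \<Rightarrow> real) \<Rightarrow> real \<Rightarrow> real" where
  "section_area s u = integral {0..u} s"

definition hydrostatic_force :: "(real \<Rightarrow> real) \<Rightarrow> real \<Rightarrow> real" where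
  "hydrostatic_force s u = integral {0..u} (\<lambda>y. (u - y) * s y)"

definition interpolate :: "real \<Rightarrow> real \<Rightarrow> real \<Rightarrow> real \<Rightarrow> real \<Rightarrow> real" where
  "interpolate xL xR fL fR x = (fR * (x - xL) + fL * (xR - x)) / (xR - xL)"

lemma integrable_on_upto:
  fixes s :: "real \<Rightarrow> real"
  assumes "continuous_on {0..} s"
  shows "s integrable_on {0..u}"
  by (rule integrable_continuous_real, rule continuous_on_subset[OF assms]) auto

lemma section_area_nonpos [simp]: "u \<le> 0 \<Longrightarrow> section_area s u = 0"
  by (cases "u = 0") (simp_all add: section_area_def)

lemma hydrostatic_force_nonpos [simp]: "u \<le> 0 \<Longrightarrow> hydrostatic_force s u = 0"
  by (cases "u = 0") (simp_all add: hydrostatic_force_def)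

lemma section_area_has_real_derivative:
  assumes "continuous_on {0..} s" "u > 0"
  shows "(section_area s has_real_derivative s u) (at u)"
proof -
  have "continuous_on {0..u+1} s"
    using assms(1) by (rule continuous_on_subset) auto
  then have "(section_area s has_real_derivative s u) (at u within {0..u+1})"
    unfolding section_area_def using assms(2) by (intro integral_has_real_derivative) auto
  moreover have "at u within {0..u+1} = at u"
    using assms(2) by (intro at_within_Icc_at) auto
  ultimately show ?thesis by simp
qed

lemma hydrostatic_force_eq:
  assumes "continuous_on {0..} s"
  shows "hydrostatic_force s u = u * section_area s u - section_area (\<lambda>y. y * s y) u"
proof -
  have "continuous_on {0..} (\<lambda>y. y * s y)"
    using assms by (intro continuous_intros)
  then have "(\<lambda>y. y * s y) integrable_on {0..u}"
    by (rule integrable_on_upto)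
  then show ?thesis
    unfolding hydrostatic_force_def section_area_def left_diff_distrib
    by (simp add: integral_diff integrable_on_mult_right integrable_on_upto[OF assms])
qed

lemma hydrostatic_force_has_real_derivative:
  assumes "continuous_on {0..} s" "u > 0"
  shows "(hydrostatic_force s has_real_derivative section_area s u) (at u)"
proof -
  have "continuous_on {0..} (\<lambda>y. y * s y)"
    using assms(1) by (intro continuous_intros)
  then have "((\<lambda>u. u * section_area s u - section_area (\<lambda>y. y * s y) u) has_real_derivative
      (u * s u + 1 * section_area s u) - u * s u) (at u)"
    using assms by (intro DERIV_diff DERIV_mult' DERIV_ident section_area_has_real_derivative)
  moreover have "hydrostatic_force s = (\<lambda>u. u * section_area s u - section_area (\<lambda>y. y * s y) u)"
    using hydrostatic_force_eq[OF assms(1)] by (simp add: fun_eq_iff)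
  ultimately show ?thesis by simp
qed

lemma section_area_max_zero [simp]: "section_area s (max u 0) = section_area s u"
  by (simp add: max_def)

lemma hydrostatic_force_max_zero [simp]: "hydrostatic_force s (max u 0) = hydrostatic_force s u"
  by (simp add: max_def)

lemma isCont_compose_max_zero:
  fixes F :: "real \<Rightarrow> real"
  assumes "\<And>b. continuous_on {0..b} F"
  shows "isCont (\<lambda>u. F (max u 0)) t"
proof -
  define r where "r = \<bar>t\<bar> + 1"
  have "continuous_on {-r..r} (\<lambda>u. F (max u 0))"
    by (rule continuous_on_compose2[OF assms[of r]]) (auto intro!: continuous_intros simp: r_def)
  moreover have "t \<in> interior {-r..r}"
    by (auto simp: r_def)
  ultimately show ?thesis
    by (rule continuous_on_interior)
qed

lemma continuous_on_section_area [continuous_intros]: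
  assumes "continuous_on {0..} s" "continuous_on S f"
  shows "continuous_on S (\<lambda>x. section_area s (f x))"
proof -
  have "continuous_on {0..b} (section_area s)" for b
    unfolding section_area_def
    by (intro indefinite_integral_continuous_1 integrable_on_upto assms(1))
  then have "isCont (section_area s) t" for t
    using isCont_compose_max_zero[of "section_area s" t] by simp
  then show ?thesis
    by (intro continuous_on_compose2[OF continuous_at_imp_continuous_on assms(2)]) auto
qed

lemma continuous_on_hydrostatic_force [continuous_intros]:
  assumes "continuous_on {0..} s" "continuous_on S f"
  shows "continuous_on S (\<lambda>x. hydrostatic_force s (f x))"
proof -
  have "continuous_on {0..} (\<lambda>y. y * s y)"
    using assms(1) by (intro continuous_intros)
  then show ?thesis
    unfolding hydrostatic_force_eq[OF assms(1)] using assms by (intro continuous_intros)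
qed

lemma hydrostatic_force_affine_has_real_derivative:
  assumes "continuous_on {0..} s" "c = 0 \<or> a + c * x \<noteq> 0"
  shows "((\<lambda>z. hydrostatic_force s (a + c * z)) has_real_derivative
           c * section_area s (a + c * x)) (at x)"
proof -
  consider "a + c * x > 0" | "a + c * x < 0" | "c = 0"
    using assms(2) by linarith
  then show ?thesis
  proof cases
    case 1
    have "((\<lambda>z. hydrostatic_force s (a + c * z)) has_real_derivative
            section_area s (a + c * x) * (0 + c * 1)) (at x)"
      by (intro DERIV_chain2[where f = "hydrostatic_force s" and g = "\<lambda>z. a + c * z",
            OF hydrostatic_force_has_real_derivative[OF assms(1) 1]]
          DERIV_add DERIV_const DERIV_cmult DERIV_ident)
    then show ?thesis by (simp add: mult.commute)
  next
    case 2
    have "((\<lambda>z. 0) has_real_derivative c * section_area s (a + c * x)) (at x)"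
      using 2 by simp
    then show ?thesis
      by (rule has_field_derivative_transform_within_open[where S = "{z. a + c * z < 0}"])
         (use 2 in \<open>auto intro!: open_Collect_less continuous_intros\<close>)
  qed simp
qed

lemma interpolate_left [simp]: "xL \<noteq> xR \<Longrightarrow> interpolate xL xR p q xL = p"
  by (simp add: interpolate_def)

lemma interpolate_right [simp]: "xL \<noteq> xR \<Longrightarrow> interpolate xL xR p q xR = q"
  by (simp add: interpolate_def)

lemma mult_interpolate: "c * interpolate xL xR p q x = interpolate xL xR (c * p) (c * q) x"
  by (simp add: interpolate_def field_simps)

lemma integral_interpolate:
  fixes f g :: "real \<Rightarrow> real"
  assumes "f integrable_on S" "g integrable_on S"
  shows "integral S (\<lambda>y. interpolate xL xR (f y) (g y) x)
           = interpolate xL xR (integral S f) (integral S g) x"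
proof (rule integral_unique)
  show "((\<lambda>y. interpolate xL xR (f y) (g y) x) has_integral
          interpolate xL xR (integral S f) (integral S g) x) S"
    unfolding interpolate_def
    using assms
    by (intro has_integral_divide has_integral_add has_integral_mult_left integrable_integral)
qed

lemma interpolate_has_real_derivative:
  assumes "(fL has_real_derivative dL) (at x)" "(fR has_real_derivative dR) (at x)"
  shows "((\<lambda>z. interpolate xL xR (fL z) (fR z) z) has_real_derivative
           (fR x - fL x) / (xR - xL) + interpolate xL xR dL dR x) (at x)"
proof -
  have "((\<lambda>z. interpolate xL xR (fL z) (fR z) z) has_real_derivative
           (dR * (x - xL) + (1 - 0) * fR x + (dL * (xR - x) + (0 - 1) * fL x)) / (xR - xL)) (at x)"
    unfolding interpolate_def
    by (intro DERIV_cdivide DERIV_add DERIV_mult DERIV_diff DERIV_ident DERIV_const assms)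
  then show ?thesis
    by (simp add: interpolate_def add_divide_distrib diff_divide_distrib algebra_simps)
qed

lemma deriv_interpolate: "deriv (interpolate xL xR p q) x = (q - p) / (xR - xL)"
proof (rule DERIV_imp_deriv)
  show "(interpolate xL xR p q has_real_derivative (q - p) / (xR - xL)) (at x)"
    using interpolate_has_real_derivative[of "\<lambda>_. p" 0 x "\<lambda>_. q" 0 xL xR]
    by (simp add: interpolate_def[abs_def])
qed

lemma section_area_interpolate:
  assumes "continuous_on {0..} sL" "continuous_on {0..} sR"
  shows "section_area (\<lambda>y. interpolate xL xR (sL y) (sR y) x) u
           = interpolate xL xR (section_area sL u) (section_area sR u) x"
  unfolding section_area_def using assms by (intro integral_interpolate integrable_on_upto)

lemma hydrostatic_force_interpolate:
  assumes "continuous_on {0..} sL" "continuous_on {0..} sR"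
  shows "hydrostatic_force (\<lambda>y. interpolate xL xR (sL y) (sR y) x) u
           = interpolate xL xR (hydrostatic_force sL u) (hydrostatic_force sR u) x"
proof -
  have "continuous_on {0..} (\<lambda>y. (u - y) * s y)" if "continuous_on {0..} s" for s
    using that by (intro continuous_intros)
  then show ?thesis
    unfolding hydrostatic_force_def mult_interpolate
    using assms by (intro integral_interpolate integrable_on_upto)
qed

lemma hydrostatic_force_diff:
  assumes "continuous_on {0..} sL" "continuous_on {0..} sR"
  shows "hydrostatic_force (\<lambda>y. sR y - sL y) u = hydrostatic_force sR u - hydrostatic_force sL u"
proof -
  have "(\<lambda>y. (u - y) * s y) integrable_on {0..u}" if "continuous_on {0..} s" for s
    using that by (intro integrable_on_upto continuous_intros)
  then show ?thesis
    unfolding hydrostatic_force_def using assms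
    by (simp add: right_diff_distrib integral_diff)
qed

text \<open>Here \<open>a + c x\<close> is the depth \<open>W - B x\<close> before clipping at zero; the clipping is
  harmless because forces and areas vanish at negative depth.\<close>
lemma interpolated_force_balance:
  fixes sL sR :: "real \<Rightarrow> real" and xL xR a c :: real
  assumes "xL < xR" "continuous_on {0..} sL" "continuous_on {0..} sR"
  shows "integral {xL..xR}
           (\<lambda>x. (hydrostatic_force sR (a + c * x) - hydrostatic_force sL (a + c * x)) / (xR - xL))
       + c * integral {xL..xR}
           (\<lambda>x. interpolate xL xR (section_area sL (a + c * x)) (section_area sR (a + c * x)) x)
       = hydrostatic_force sR (a + c * xR) - hydrostatic_force sL (a + c * xL)"
proof -
  define G where "G = (\<lambda>x. interpolate xL xR
      (hydrostatic_force sL (a + c * x)) (hydrostatic_force sR (a + c * x)) x)"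
  define I2 where "I2 = (\<lambda>x.
      (hydrostatic_force sR (a + c * x) - hydrostatic_force sL (a + c * x)) / (xR - xL))"
  define A where "A = (\<lambda>x. interpolate xL xR
      (section_area sL (a + c * x)) (section_area sR (a + c * x)) x)"
  have "finite {x. c \<noteq> 0 \<and> a + c * x = 0}"
    by (rule finite_subset[of _ "{- a / c}"]) (auto simp: field_simps)
  moreover have "(G has_real_derivative I2 x + c * A x) (at x)" if "c = 0 \<or> a + c * x \<noteq> 0" for x
    using interpolate_has_real_derivative[OF
        hydrostatic_force_affine_has_real_derivative[OF assms(2) that]
        hydrostatic_force_affine_has_real_derivative[OF assms(3) that]]
    by (simp add: G_def I2_def A_def mult_interpolate)
  moreover have "continuous_on {xL..xR} G" "continuous_on {xL..xR} I2" "continuous_on {xL..xR} A"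
    using assms unfolding G_def I2_def A_def interpolate_def by (auto intro!: continuous_intros)
  ultimately have "((\<lambda>x. I2 x + c * A x) has_integral G xR - G xL) {xL..xR}"
    using assms(1)
    by (intro fundamental_theorem_of_calculus_strong[of "{x. c \<noteq> 0 \<and> a + c * x = 0}"])
      (auto simp: has_real_derivative_iff_has_vector_derivative[symmetric])
  moreover have "integral {xL..xR} (\<lambda>x. I2 x + c * A x)
      = integral {xL..xR} I2 + c * integral {xL..xR} A"
    using \<open>continuous_on {xL..xR} I2\<close> \<open>continuous_on {xL..xR} A\<close>
    by (simp add: integral_add integrable_continuous_real integrable_on_mult_right)
  ultimately show ?thesis
    using assms(1) by (simp add: G_def I2_def A_def integral_unique)
qed

theorem mainTheorem2:
  fixes xL xR BL BR W :: real
    and sigmaL sigmaR :: "real \<Rightarrow> real"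
    and sigma :: "real \<Rightarrow> real \<Rightarrow> real"
    and B h A I1 I2 :: "real \<Rightarrow> real"
  assumes "xL < xR"
    and "piecewise_linear_nonneg_half sigmaL" "continuous_on {0..} sigmaL"
    and "\<forall>y\<ge>0. sigmaL y \<ge> 0"
    and "piecewise_linear_nonneg_half sigmaR" "continuous_on {0..} sigmaR"
    and "\<forall>y\<ge>0. sigmaR y \<ge> 0"
    and "sigma = (\<lambda>x y. (sigmaR y * (x - xL) + sigmaL y * (xR - x)) / (xR - xL))"
    and "B = (\<lambda>x. BL + (BR - BL) * (x - xL) / (xR - xL))"
    and "h = (\<lambda>x. max (W - B x) 0)"
    and "A = (\<lambda>x. integral {0..h x} (\<lambda>y. sigma x y))"
    and "I1 = (\<lambda>x. integral {0..h x} (\<lambda>y. (h x - y) * sigma x y))"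
    and "I2 = (\<lambda>x. integral {0..h x} (\<lambda>y. (h x - y) * deriv (\<lambda>s. sigma s y) x))"
  shows "I1 xR - I1 xL - integral {xL..xR} I2 + integral {xL..xR} (\<lambda>x. A x * deriv B x) = 0"
proof -
  define c where "c = (BL - BR) / (xR - xL)"
  define a where "a = W - BL - c * xL"
  have sigma: "sigma x = (\<lambda>y. interpolate xL xR (sigmaL y) (sigmaR y) x)" for x
    using assms(8) by (simp add: interpolate_def)
  have "W - B x = a + c * x" for x
    using assms(9) by (simp add: a_def c_def algebra_simps add_divide_distrib diff_divide_distrib)
  then have depth: "h x = max (a + c * x) 0" for x
    by (simp add: assms(10))
  have I1: "I1 x = interpolate xL xR
      (hydrostatic_force sigmaL (a + c * x)) (hydrostatic_force sigmaR (a + c * x)) x" for x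
    using hydrostatic_force_interpolate[OF assms(3,6)]
    by (simp add: assms(12) sigma depth hydrostatic_force_def[symmetric])
  have A: "A x = interpolate xL xR
      (section_area sigmaL (a + c * x)) (section_area sigmaR (a + c * x)) x" for x
    using section_area_interpolate[OF assms(3,6)]
    by (simp add: assms(11) sigma depth section_area_def[symmetric])
  have I2: "I2 x =
      (hydrostatic_force sigmaR (a + c * x) - hydrostatic_force sigmaL (a + c * x)) / (xR - xL)" for x
    using hydrostatic_force_diff[OF assms(3,6)]
    by (simp add: assms(13) sigma deriv_interpolate depth hydrostatic_force_def[symmetric])
  have "B = interpolate xL xR BL BR"
    using assms(1,9) by (simp add: fun_eq_iff interpolate_def field_simps)
  then have "deriv B x = - c" for x
    by (simp add: deriv_interpolate c_def minus_divide_left)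
  then show ?thesis
    using interpolated_force_balance[OF assms(1,3,6), of a c] assms(1)
    by (simp add: I1 A I2[abs_def] mult.commute)
qed

end
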